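(* Let $(X,f)$ be a dynamical system. The following are equivalent: (1) $(X,f)$ is $\Delta$-transitive; (2) $(X,f)$ is $\mathcal{F}[\infty]$-point transitive; (3) $Trans_{\mathcal{F}[\infty]}(X,f)$ is residual in $X$.
   Context: A dynamical system is a pair $(X,f)$ with $X$ a compact metric space and $f:X\to X$ continuous. $\mathbb{N}=\{1,2,\dots\}$, $\mathbb{Z}_+=\{0,1,2,\dots\}$. $N(x,U)=\{n\in\mathbb{N}: f^n(x)\in U\}$. For a family $\mathcal{F}$ of subsets of $\mathbb{N}$, $x$ is an $\mathcal{F}$-transitive point if $N(x,U)\in\mathcal{F}$ for every non-empty open $U\subset X$; $Trans_{\mathcal{F}}(X,f)$ is the set of such points; $(X,f)$ is $\mathcal{F}$-point transitive if it is non-empty. For a system $(Y,g)$, $y$ is a transitive point if its $\omega$-limit set equals $Y$. $(X,f)$ is $\Delta$-transitive if for every $n\in\mathbb{N}$ there is $x\in X$ such that $(x,\dots,x)$ is a transitive point of $(X^n,f\times f^2\times\dots\times f^n)$. For $\mathbf{a}=(a_1,\dots,a_r)\in\mathbb{N}^r$, $\mathcal{F}[\mathbf{a}]$ is the collection of all $F\subset\mathbb{N}$ such that for every $(n_1,\dots,n_r)\in\mathbb{Z}_+^r$ there is $k\in\mathbb{N}$ with $ka_i+n_i\in F$ for all $i$; $\mathcal{F}[\infty]=\bigcap_{i=1}^\infty\mathcal{F}[(1,2,\dots,i)]$. *)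

theory Defs
  imports "HOL-Analysis.Analysis"
begin

definition dyn_system :: "'a::metric_space set \<Rightarrow> ('a \<Rightarrow> 'a) \<Rightarrow> bool" where
  "dyn_system X f \<longleftrightarrow> X \<noteq> {} \<and> compact X \<and> continuous_on X f \<and> f ` X \<subseteq> X"

definition hitting_times :: "('a \<Rightarrow> 'a) \<Rightarrow> 'a \<Rightarrow> 'a set \<Rightarrow> nat set" where
  "hitting_times f x U = {n. n \<ge> 1 \<and> (f ^^ n) x \<in> U}"

definition Trans_F :: "'a::metric_space set \<Rightarrow> ('a \<Rightarrow> 'a) \<Rightarrow> nat set set \<Rightarrow> 'a set" where
  "Trans_F X f \<F> = {x \<in> X. \<forall>U. openin (top_of_set X) U \<and> U \<noteq> {} \<longrightarrow> hitting_times f x U \<in> \<F>}"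

definition F_point_transitive :: "'a::metric_space set \<Rightarrow> ('a \<Rightarrow> 'a) \<Rightarrow> nat set set \<Rightarrow> bool" where
  "F_point_transitive X f \<F> \<longleftrightarrow> Trans_F X f \<F> \<noteq> {}"

definition F_vec :: "nat list \<Rightarrow> nat set set" where
  "F_vec a = {F. F \<subseteq> {1..} \<and>
     (\<forall>ns::nat list. length ns = length a \<longrightarrow>
        (\<exists>k\<ge>1. \<forall>i<length a. k * a ! i + ns ! i \<in> F))}"

definition F_infty :: "nat set set" where
  "F_infty = (\<Inter>i\<in>{1..}. F_vec [1..<i+1])"

definition omega_limit :: "'b topology \<Rightarrow> ('b \<Rightarrow> 'b) \<Rightarrow> 'b \<Rightarrow> 'b set" where
  "omega_limit T g y = {z \<in> topspace T. \<forall>U. openin T U \<and> z \<in> U \<longrightarrow>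
                          (\<forall>N. \<exists>k\<ge>N. (g ^^ k) y \<in> U)}"

definition transitive_point :: "'b topology \<Rightarrow> ('b \<Rightarrow> 'b) \<Rightarrow> 'b \<Rightarrow> bool" where
  "transitive_point T g y \<longleftrightarrow> omega_limit T g y = topspace T"

text \<open>Delta-transitivity. X^n is modelled as the product topology on extensional
  functions {1..n} \<rightarrow> X; the map is f \<times> f^2 \<times> ... \<times> f^n.\<close>
definition Delta_transitive :: "'a::metric_space set \<Rightarrow> ('a \<Rightarrow> 'a) \<Rightarrow> bool" where
  "Delta_transitive X f \<longleftrightarrow>
     (\<forall>n::nat. n \<ge> 1 \<longrightarrow> (\<exists>x\<in>X.
        transitive_point (product_topology (\<lambda>_. top_of_set X) {1..n})
          (\<lambda>y. restrict (\<lambda>i. (f ^^ i) (y i)) {1..n})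
          (restrict (\<lambda>_. x) {1..n})))"

definition residual_in :: "'a::metric_space set \<Rightarrow> 'a set \<Rightarrow> bool" where
  "residual_in X S \<longleftrightarrow> S \<subseteq> X \<and>
     (\<exists>\<U>. countable \<U> \<and> (\<forall>U\<in>\<U>. openin (top_of_set X) U \<and> X \<subseteq> closure U) \<and>
          X \<inter> \<Inter>\<U> \<subseteq> S)"

end

theory Submission
  imports Defs
begin

text \<open>
  A point \<open>x\<close> is \<open>\<F>[\<infinity>]\<close>-transitive iff for every nonempty open \<open>V\<close> and every
  offset vector \<open>(n\<^sub>1, \<dots>, n\<^sub>r)\<close> it lies in the open set of points \<open>y\<close> admitting a
  \<open>k \<ge> 1\<close> with \<open>f\<^bsup>k i + n\<^sub>i\<^esup> y \<in> V\<close> for all \<open>i\<close>. Both \<open>\<Delta>\<close>-transitivity and the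
  existence of one \<open>\<F>[\<infinity>]\<close>-transitive point make all these sets dense; over a countable
  \<open>\<pi>\<close>-base this exhibits the \<open>\<F>[\<infinity>]\<close>-transitive points as a dense \<open>G\<^sub>\<delta>\<close>, nonempty
  by Baire. Conversely an \<open>\<F>[\<infinity>]\<close>-transitive point \<open>x\<close> is itself a \<open>\<Delta>\<close>-transitive
  witness: if \<open>f\<^bsup>a\<^sub>j\<^esup> x \<in> A\<^sub>j\<close>, the returns of \<open>x\<close> to its neighbourhood
  \<open>\<Inter>\<^sub>j f\<^bsup>-a\<^sub>j\<^esup> A\<^sub>j\<close> along suitably shifted progressions place \<open>f\<^bsup>j m\<^esup> x\<close> in \<open>A\<^sub>j\<close>
  for a common \<open>m\<close>.
\<close>

lemma funpow_add_apply: "(f ^^ (m + n)) x = (f ^^ m) ((f ^^ n) x)"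
  by (simp add: funpow_add)

lemma funpow_in: "f ` X \<subseteq> X \<Longrightarrow> x \<in> X \<Longrightarrow> (f ^^ m) x \<in> X"
  by (induction m) auto

lemma continuous_on_funpow:
  assumes "continuous_on X f" "f ` X \<subseteq> X"
  shows "continuous_on X (f ^^ m)"
proof (induction m)
  case (Suc m)
  have "(f ^^ m) ` X \<subseteq> X" using funpow_in[OF assms(2)] by blast
  then have "continuous_on X (f \<circ> f ^^ m)"
    by (intro continuous_on_compose Suc continuous_on_subset[OF assms(1)])
  then show ?case by simp
qed simp

lemma openin_funpow_preimage:
  assumes "continuous_on X f" "f ` X \<subseteq> X" "openin (top_of_set X) V"
  shows "openin (top_of_set X) (X \<inter> (f ^^ m) -` V)"
  by (rule continuous_openin_preimage[OF continuous_on_funpow[OF assms(1,2)]])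
     (use funpow_in[OF assms(2)] assms(3) in auto)

lemma funpow_product_map:
  fixes f :: "'a \<Rightarrow> 'a"
  shows "((\<lambda>y. restrict (\<lambda>i. (f ^^ i) (y i)) I) ^^ k) (restrict h I)
     = restrict (\<lambda>i. (f ^^ (i * k)) (h i)) I"
proof (induction k)
  case (Suc k)
  show ?case
    by (simp only: funpow.simps(2) comp_apply Suc.IH)
       (simp add: fun_eq_iff funpow_add)
qed simp

subsection \<open>\<open>\<Delta>\<close>-transitivity as diagonal transitivity\<close>

definition diagonally_transitive :: "'a::metric_space set \<Rightarrow> ('a \<Rightarrow> 'a) \<Rightarrow> nat \<Rightarrow> 'a \<Rightarrow> bool" where
  "diagonally_transitive X f n x \<longleftrightarrow>
     (\<forall>A N. (\<forall>j\<in>{1..n}. openin (top_of_set X) (A j) \<and> A j \<noteq> {}) \<longrightarrow>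
        (\<exists>k\<ge>N. \<forall>j\<in>{1..n}. (f ^^ (j * k)) x \<in> A j))"

lemma transitive_point_product_iff:
  fixes f :: "'a::metric_space \<Rightarrow> 'a"
  shows "transitive_point (product_topology (\<lambda>_. top_of_set X) {1..n})
           (\<lambda>y. restrict (\<lambda>i. (f ^^ i) (y i)) {1..n}) (restrict (\<lambda>_. x) {1..n})
         \<longleftrightarrow> diagonally_transitive X f n x"
    (is "transitive_point ?T ?g ?x \<longleftrightarrow> _")
proof
  assume trans: "transitive_point ?T ?g ?x"
  show "diagonally_transitive X f n x"
    unfolding diagonally_transitive_def
  proof (intro allI impI)
    fix A :: "nat \<Rightarrow> 'a set" and N :: nat
    assume A: "\<forall>j\<in>{1..n}. openin (top_of_set X) (A j) \<and> A j \<noteq> {}"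
    define z where "z = restrict (\<lambda>j. SOME a. a \<in> A j) {1..n}"
    have zA: "z \<in> Pi\<^sub>E {1..n} A"
      unfolding z_def using A by (auto simp: some_in_eq)
    moreover have "A j \<subseteq> X" if "j \<in> {1..n}" for j
      using A that openin_imp_subset by blast
    ultimately have "z \<in> topspace ?T" by (force simp: PiE_iff)
    then have "z \<in> omega_limit ?T ?g ?x"
      using trans by (simp add: transitive_point_def)
    moreover have "openin ?T (Pi\<^sub>E {1..n} A)"
      unfolding openin_PiE_gen using A by auto
    ultimately obtain k where "k \<ge> N" "(?g ^^ k) ?x \<in> Pi\<^sub>E {1..n} A"
      using zA unfolding omega_limit_def by blast
    then show "\<exists>k\<ge>N. \<forall>j\<in>{1..n}. (f ^^ (j * k)) x \<in> A j"
      by (auto simp: funpow_product_map PiE_iff)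
  qed
next
  assume diag: "diagonally_transitive X f n x"
  have "z \<in> omega_limit ?T ?g ?x" if z: "z \<in> topspace ?T" for z
    unfolding omega_limit_def
  proof (intro CollectI conjI allI impI)
    fix U N assume U: "openin ?T U \<and> z \<in> U"
    then obtain V where V: "\<forall>i\<in>{1..n}. openin (top_of_set X) (V i)" "z \<in> Pi\<^sub>E {1..n} V"
      "Pi\<^sub>E {1..n} V \<subseteq> U"
      unfolding openin_product_topology_alt by metis
    then have "\<forall>j\<in>{1..n}. openin (top_of_set X) (V j) \<and> V j \<noteq> {}"
      by (auto simp: PiE_iff)
    then obtain k where "k \<ge> N" "\<forall>j\<in>{1..n}. (f ^^ (j * k)) x \<in> V j"
      using diag unfolding diagonally_transitive_def by blast
    moreover from this(2) have "(?g ^^ k) ?x \<in> Pi\<^sub>E {1..n} V"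
      by (simp add: funpow_product_map)
    ultimately show "\<exists>k\<ge>N. (?g ^^ k) ?x \<in> U"
      using V(3) by blast
  qed (fact z)
  then show "transitive_point ?T ?g ?x"
    unfolding transitive_point_def omega_limit_def by blast
qed

lemma Delta_transitive_iff:
  "Delta_transitive X f \<longleftrightarrow> (\<forall>n\<ge>1. \<exists>x\<in>X. diagonally_transitive X f n x)"
  by (simp only: Delta_transitive_def transitive_point_product_iff)

subsection \<open>\<open>\<F>[\<infinity>]\<close>-transitive points\<close>

lemma F_infty_iff:
  "F \<in> F_infty \<longleftrightarrow> F \<subseteq> {1..} \<and> (\<forall>ns. \<exists>k\<ge>1. \<forall>i<length ns. k * Suc i + ns ! i \<in> F)"
  (is "_ \<longleftrightarrow> ?R")
proof
  assume F: "F \<in> F_infty"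
  then have "F \<in> F_vec [1..<1 + 1]"
    unfolding F_infty_def by (meson INT_E atLeast_iff order_refl)
  then have "F \<subseteq> {1..}" by (simp add: F_vec_def)
  moreover have "\<exists>k\<ge>1. \<forall>i<length ns. k * Suc i + ns ! i \<in> F" for ns
  proof (cases "ns = []")
    case False
    then have "F \<in> F_vec [1..<length ns + 1]"
      using F by (auto simp: F_infty_def Suc_le_eq)
    then show ?thesis by (simp add: F_vec_def del: upt_Suc)
  qed auto
  ultimately show ?R by blast
next
  assume F: ?R
  have "F \<in> F_vec [1..<r + 1]" for r
    unfolding F_vec_def
  proof (intro CollectI conjI allI impI)
    fix ns :: "nat list"
    assume "length ns = length [1..<r + 1]"
    then show "\<exists>k\<ge>1. \<forall>i<length [1..<r + 1]. k * [1..<r + 1] ! i + ns ! i \<in> F"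
      using conjunct2[OF F, rule_format, of ns] by (simp del: upt_Suc)
  qed (use F in blast)
  then show "F \<in> F_infty" unfolding F_infty_def by blast
qed

text \<open>Offsets are \<open>0\<close>-indexed: \<open>ns ! i\<close> is the offset attached to \<open>a\<^sub>i\<^sub>+\<^sub>1 = i + 1\<close>.\<close>
definition diagonal_visits :: "'a set \<Rightarrow> ('a \<Rightarrow> 'a) \<Rightarrow> 'a set \<Rightarrow> nat list \<Rightarrow> 'a set" where
  "diagonal_visits X f V ns = {y \<in> X. \<exists>k\<ge>1. \<forall>i<length ns. (f ^^ (k * Suc i + ns ! i)) y \<in> V}"

lemma hitting_times_in_F_infty_iff:
  "hitting_times f x U \<in> F_infty \<longleftrightarrow>
     (\<forall>ns. \<exists>k\<ge>1. \<forall>i<length ns. (f ^^ (k * Suc i + ns ! i)) x \<in> U)"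
  by (simp add: F_infty_iff hitting_times_def subset_eq cong: conj_cong)

lemma Trans_F_infty_iff:
  "x \<in> Trans_F X f F_infty \<longleftrightarrow>
     x \<in> X \<and> (\<forall>U ns. openin (top_of_set X) U \<and> U \<noteq> {} \<longrightarrow> x \<in> diagonal_visits X f U ns)"
  by (auto simp: Trans_F_def hitting_times_in_F_infty_iff diagonal_visits_def)

lemma diagonal_visits_mono: "V \<subseteq> V' \<Longrightarrow> diagonal_visits X f V ns \<subseteq> diagonal_visits X f V' ns"
  by (auto simp: diagonal_visits_def)

lemma openin_diagonal_visits:
  assumes "continuous_on X f" "f ` X \<subseteq> X" "openin (top_of_set X) V"
  shows "openin (top_of_set X) (diagonal_visits X f V ns)"
proof -
  have eq: "diagonal_visits X f V ns = (\<Union>k\<in>{1..}.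
          (\<Inter>i<length ns. X \<inter> (f ^^ (k * Suc i + ns ! i)) -` V) \<inter> topspace (top_of_set X))"
    by (auto simp: diagonal_visits_def)
  have open_k:
    "openin (top_of_set X) ((\<Inter>i<length ns. X \<inter> (f ^^ m i) -` V) \<inter> topspace (top_of_set X))"
    for m
    by (intro openin_INT) (auto intro: openin_funpow_preimage[OF assms])
  show ?thesis
    unfolding eq by (intro openin_Union) (clarify, rule open_k)
qed

lemma funpow_in_diagonal_visits:
  assumes "f ` X \<subseteq> X" "x \<in> diagonal_visits X f V (map (\<lambda>n. n + m) ns)"
  shows "(f ^^ m) x \<in> diagonal_visits X f V ns"
proof -
  obtain k where k: "k \<ge> 1" "\<forall>i<length ns. (f ^^ (k * Suc i + (ns ! i + m))) x \<in> V"
    "x \<in> X"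
    using assms(2) by (auto simp: diagonal_visits_def)
  then have "(f ^^ (k * Suc i + ns ! i)) ((f ^^ m) x) \<in> V" if "i < length ns" for i
    using that by (simp add: funpow_add_apply[symmetric] add.assoc)
  then show ?thesis
    using k funpow_in[OF assms(1)] by (auto simp: diagonal_visits_def)
qed

subsection \<open>Residuality\<close>

lemma compact_countable_pi_base:
  fixes X :: "'a::metric_space set"
  assumes "compact X"
  shows "\<exists>\<B>. countable \<B> \<and> (\<forall>V\<in>\<B>. openin (top_of_set X) V \<and> V \<noteq> {}) \<and>
           (\<forall>U. openin (top_of_set X) U \<and> U \<noteq> {} \<longrightarrow> (\<exists>V\<in>\<B>. V \<subseteq> U))"
proof -
  have "\<forall>m::nat. \<exists>K. finite K \<and> K \<subseteq> X \<and> X \<subseteq> (\<Union>c\<in>K. ball c (inverse (Suc m)))"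
    using seq_compact_imp_totally_bounded[OF compact_imp_seq_compact[OF assms]] by simp
  then obtain K where K: "\<And>m. finite (K m)" "\<And>m. K m \<subseteq> X"
    "\<And>m. X \<subseteq> (\<Union>c\<in>K m. ball c (inverse (Suc m)))"
    by metis
  define \<B> where "\<B> = (\<lambda>(m, c). X \<inter> ball c (inverse (Suc m))) ` (SIGMA m:UNIV. K m)"
  have "countable \<B>"
    unfolding \<B>_def using K(1) by (intro countable_image countable_SIGMA) (auto intro: countable_finite)
  moreover have "openin (top_of_set X) V \<and> V \<noteq> {}" if "V \<in> \<B>" for V
    using that K(2) unfolding \<B>_def by force
  moreover have "\<exists>V\<in>\<B>. V \<subseteq> U" if U: "openin (top_of_set X) U" "U \<noteq> {}" for U
  proof -
    obtain p where p: "p \<in> U" using U(2) by blast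
    then obtain e where e: "e > 0" "\<And>y. y \<in> X \<Longrightarrow> dist y p < e \<Longrightarrow> y \<in> U"
      using U(1) unfolding openin_euclidean_subtopology_iff by blast
    obtain m :: nat where m: "inverse (Suc m) < e / 2"
      using reals_Archimedean[of "e / 2"] e(1) by auto
    have "p \<in> X" using U(1) p openin_imp_subset by blast
    then obtain c where c: "c \<in> K m" "dist c p < inverse (Suc m)"
      using K(3) by (force simp: dist_commute)
    have "X \<inter> ball c (inverse (Suc m)) \<subseteq> U"
    proof
      fix y assume y: "y \<in> X \<inter> ball c (inverse (Suc m))"
      have "dist y p \<le> dist y c + dist c p" by (rule dist_triangle)
      also have "\<dots> < e" using y c m by (simp add: dist_commute)
      finally show "y \<in> U" using e y by blast
    qed
    moreover have "X \<inter> ball c (inverse (Suc m)) \<in> \<B>"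
      unfolding \<B>_def using c(1) by force
    ultimately show ?thesis by blast
  qed
  ultimately show ?thesis by blast
qed

lemma residual_in_nonempty:
  assumes "compact X" "X \<noteq> {}" "residual_in X S"
  shows "S \<noteq> {}"
proof -
  obtain \<U> where \<U>: "countable \<U>" "\<And>U. U \<in> \<U> \<Longrightarrow> openin (top_of_set X) U \<and> X \<subseteq> closure U"
    "X \<inter> \<Inter>\<U> \<subseteq> S"
    using assms(3) unfolding residual_in_def by blast
  have closure_of_X: "top_of_set X closure_of T = X \<inter> closure (X \<inter> T)" for T
    by (simp add: closure_of_subtopology)
  have "top_of_set X closure_of \<Inter>\<U> = topspace (top_of_set X)"
  proof (rule Baire_category)
    have "locally_compact_space (top_of_set X)"
      using assms(1) by (simp add: compact_imp_locally_compact_space compact_space_subtopology)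
    moreover have "regular_space (top_of_set X)"
      by (intro regular_space_subtopology metrizable_imp_regular_space metrizable_space_euclidean)
    ultimately show "completely_metrizable_space (top_of_set X) \<or>
        locally_compact_space (top_of_set X) \<and> regular_space (top_of_set X)"
      by blast
    fix T assume T: "T \<in> \<U>"
    then have "T \<subseteq> X" using \<U>(2) openin_imp_subset by blast
    then show "openin (top_of_set X) T \<and> top_of_set X closure_of T = topspace (top_of_set X)"
      using \<U>(2)[OF T] closure_of_X[of T] by (auto simp: Int_absorb1)
  qed (fact \<U>(1))
  then have "X \<inter> \<Inter>\<U> \<noteq> {}"
    using closure_of_X assms(2) by auto
  then show ?thesis using \<U>(3) by blast
qed

definition dense_diagonal_visits :: "'a::metric_space set \<Rightarrow> ('a \<Rightarrow> 'a) \<Rightarrow> bool" where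
  "dense_diagonal_visits X f \<longleftrightarrow>
     (\<forall>V ns W. openin (top_of_set X) V \<and> V \<noteq> {} \<and> openin (top_of_set X) W \<and> W \<noteq> {}
        \<longrightarrow> diagonal_visits X f V ns \<inter> W \<noteq> {})"

lemma closure_diagonal_visits:
  assumes "dense_diagonal_visits X f" "openin (top_of_set X) V" "V \<noteq> {}"
  shows "X \<subseteq> closure (diagonal_visits X f V ns)"
proof
  fix p assume "p \<in> X"
  have "diagonal_visits X f V ns \<inter> (X \<inter> ball p e) \<noteq> {}" if "e > 0" for e
  proof -
    have "openin (top_of_set X) (X \<inter> ball p e)" "X \<inter> ball p e \<noteq> {}"
      using \<open>p \<in> X\<close> that by auto
    then show ?thesis
      using assms unfolding dense_diagonal_visits_def by blast
  qed
  then show "p \<in> closure (diagonal_visits X f V ns)"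
    unfolding closure_approachable by (fastforce simp: dist_commute)
qed

lemma dense_diagonal_visits_imp_residual:
  assumes "dyn_system X f" "dense_diagonal_visits X f"
  shows "residual_in X (Trans_F X f F_infty)"
proof -
  have X: "compact X" "continuous_on X f" "f ` X \<subseteq> X"
    using assms(1) by (auto simp: dyn_system_def)
  obtain \<B> where \<B>: "countable \<B>" "\<And>V. V \<in> \<B> \<Longrightarrow> openin (top_of_set X) V \<and> V \<noteq> {}"
     "\<And>U. openin (top_of_set X) U \<Longrightarrow> U \<noteq> {} \<Longrightarrow> \<exists>V\<in>\<B>. V \<subseteq> U"
    using compact_countable_pi_base[OF X(1)] by metis
  define \<U> where "\<U> = (\<lambda>(V, ns). diagonal_visits X f V ns) ` (\<B> \<times> UNIV)"
  have "countable \<U>" unfolding \<U>_def using \<B>(1) by auto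
  moreover have "openin (top_of_set X) U \<and> X \<subseteq> closure U" if "U \<in> \<U>" for U
  proof -
    obtain V ns where "V \<in> \<B>" "U = diagonal_visits X f V ns"
      using \<open>U \<in> \<U>\<close> unfolding \<U>_def by auto
    then show ?thesis
      using \<B>(2) openin_diagonal_visits[OF X(2,3)] closure_diagonal_visits[OF assms(2)] by blast
  qed
  moreover have "X \<inter> \<Inter>\<U> \<subseteq> Trans_F X f F_infty"
  proof
    fix x assume x: "x \<in> X \<inter> \<Inter>\<U>"
    have "x \<in> diagonal_visits X f U ns" if U: "openin (top_of_set X) U" "U \<noteq> {}" for U ns
    proof -
      obtain V where V: "V \<in> \<B>" "V \<subseteq> U" using \<B>(3)[OF U] by blast
      then have "diagonal_visits X f V ns \<in> \<U>" unfolding \<U>_def by force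
      then show ?thesis
        using x diagonal_visits_mono[OF V(2)] by blast
    qed
    then show "x \<in> Trans_F X f F_infty" using x by (simp add: Trans_F_infty_iff)
  qed
  moreover have "Trans_F X f F_infty \<subseteq> X" by (auto simp: Trans_F_def)
  ultimately show ?thesis unfolding residual_in_def by blast
qed

lemma Trans_F_infty_visits:
  assumes "x \<in> Trans_F X f F_infty" "openin (top_of_set X) U" "U \<noteq> {}"
  shows "\<exists>k. (f ^^ k) x \<in> U"
proof -
  have "x \<in> diagonal_visits X f U [0]"
    using assms unfolding Trans_F_infty_iff by blast
  then show ?thesis by (auto simp: diagonal_visits_def)
qed

lemma Trans_F_infty_imp_dense:
  assumes "f ` X \<subseteq> X" "x \<in> Trans_F X f F_infty"
  shows "dense_diagonal_visits X f"
  unfolding dense_diagonal_visits_def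
proof (intro allI impI)
  fix V ns W
  assume VW: "openin (top_of_set X) V \<and> V \<noteq> {} \<and> openin (top_of_set X) W \<and> W \<noteq> {}"
  then obtain k where "(f ^^ k) x \<in> W"
    using Trans_F_infty_visits[OF assms(2)] by blast
  moreover have "x \<in> diagonal_visits X f V (map (\<lambda>n. n + k) ns)"
    using assms(2) VW unfolding Trans_F_infty_iff by blast
  then have "(f ^^ k) x \<in> diagonal_visits X f V ns"
    by (rule funpow_in_diagonal_visits[OF assms(1)])
  ultimately show "diagonal_visits X f V ns \<inter> W \<noteq> {}" by blast
qed

lemma funpow_preimage_nonempty:
  assumes "f ` X \<subseteq> X" "x \<in> X" "diagonally_transitive X f 1 x"
    "openin (top_of_set X) V" "V \<noteq> {}"
  shows "X \<inter> (f ^^ m) -` V \<noteq> {}"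
proof -
  obtain k where "k \<ge> m" "(f ^^ k) x \<in> V"
    using assms(3-5) unfolding diagonally_transitive_def by fastforce
  then have "(f ^^ (m + (k - m))) x \<in> V" by simp
  then have "(f ^^ m) ((f ^^ (k - m)) x) \<in> V" by (simp only: funpow_add_apply)
  then show ?thesis using funpow_in[OF assms(1,2)] by blast
qed

text \<open>A diagonal visit of \<open>V\<close> with offsets \<open>ns\<close> starting in \<open>W\<close> comes from a diagonal
  return with \<open>length ns + 1\<close> targets: \<open>W\<close> at time \<open>k\<close> and the preimage of \<open>V\<close> under
  \<open>f ^^ (ns ! i)\<close> at time \<open>(i + 2) k\<close>.\<close>
lemma Delta_transitive_imp_dense:
  assumes "continuous_on X f" "f ` X \<subseteq> X" "Delta_transitive X f"
  shows "dense_diagonal_visits X f"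
  unfolding dense_diagonal_visits_def
proof (intro allI impI)
  fix V W :: "'a set" and ns :: "nat list"
  assume VW: "openin (top_of_set X) V \<and> V \<noteq> {} \<and> openin (top_of_set X) W \<and> W \<noteq> {}"
  have diag: "\<exists>x\<in>X. diagonally_transitive X f n x" if "n \<ge> 1" for n
    using assms(3) that by (simp add: Delta_transitive_iff)
  obtain x1 where x1: "x1 \<in> X" "diagonally_transitive X f 1 x1"
    using diag[of 1] by auto
  obtain x where x: "x \<in> X" "diagonally_transitive X f (length ns + 1) x"
    using diag[of "length ns + 1"] by auto
  define A where "A j = (if j = 1 then W else X \<inter> (f ^^ (ns ! (j - 2))) -` V)" for j
  have "\<forall>j\<in>{1..length ns + 1}. openin (top_of_set X) (A j) \<and> A j \<noteq> {}"
    using VW openin_funpow_preimage[OF assms(1,2)] funpow_preimage_nonempty[OF assms(2) x1]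
    unfolding A_def by auto
  then obtain k where k: "k \<ge> 1" "\<forall>j\<in>{1..length ns + 1}. (f ^^ (j * k)) x \<in> A j"
    using x(2) unfolding diagonally_transitive_def by blast
  have "(f ^^ k) x \<in> diagonal_visits X f V ns"
    unfolding diagonal_visits_def
  proof (intro CollectI conjI exI[of _ k] allI impI)
    fix i assume "i < length ns"
    then have "(f ^^ (Suc (Suc i) * k)) x \<in> A (Suc (Suc i))"
      using k(2)[rule_format, of "Suc (Suc i)"] by simp
    then have "(f ^^ (ns ! i)) ((f ^^ (Suc (Suc i) * k)) x) \<in> V"
      by (simp add: A_def)
    moreover have "(f ^^ (k * Suc i + ns ! i)) ((f ^^ k) x) = (f ^^ (ns ! i)) ((f ^^ (Suc (Suc i) * k)) x)"
      by (simp only: funpow_add_apply[symmetric]) (simp add: algebra_simps)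
    ultimately show "(f ^^ (k * Suc i + ns ! i)) ((f ^^ k) x) \<in> V" by simp
  qed (use x k funpow_in[OF assms(2)] in auto)
  moreover have "(f ^^ k) x \<in> W" using k(2)[rule_format, of 1] by (simp add: A_def)
  ultimately show "diagonal_visits X f V ns \<inter> W \<noteq> {}" by blast
qed

text \<open>With visiting times \<open>a\<^sub>j\<close> of \<open>A\<^sub>j\<close> and \<open>c \<ge> N + \<Sum> a\<^sub>j\<close>, the point returns to its
  neighbourhood \<open>W\<close> at the times \<open>k j + (c j - a\<^sub>j)\<close>, hence lies in \<open>A\<^sub>j\<close> at time \<open>j (k + c)\<close>.\<close>
lemma Trans_F_infty_imp_diagonally_transitive:
  assumes "continuous_on X f" "f ` X \<subseteq> X" "x \<in> Trans_F X f F_infty"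
  shows "diagonally_transitive X f n x"
  unfolding diagonally_transitive_def
proof (intro allI impI)
  fix A :: "nat \<Rightarrow> 'a set" and N :: nat
  assume A: "\<forall>j\<in>{1..n}. openin (top_of_set X) (A j) \<and> A j \<noteq> {}"
  have "\<forall>j\<in>{1..n}. \<exists>a. (f ^^ a) x \<in> A j"
    using Trans_F_infty_visits[OF assms(3)] A by blast
  then have "\<exists>a. \<forall>j\<in>{1..n}. (f ^^ a j) x \<in> A j"
    by (rule bchoice)
  then obtain a where a: "\<forall>j\<in>{1..n}. (f ^^ a j) x \<in> A j" ..
  define c where "c = N + sum a {1..n}"
  have ac: "a j \<le> c * j" if "j \<in> {1..n}" for j
  proof -
    have "a j \<le> sum a {1..n}" using that by (intro member_le_sum) auto
    also have "\<dots> \<le> c" by (simp add: c_def)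
    also have "c \<le> c * j" using that by simp
    finally show ?thesis .
  qed
  define W where "W = (\<Inter>j\<in>{1..n}. X \<inter> (f ^^ a j) -` A j) \<inter> topspace (top_of_set X)"
  have "openin (top_of_set X) W"
    unfolding W_def using A by (intro openin_INT) (auto intro: openin_funpow_preimage[OF assms(1,2)])
  moreover have "x \<in> W"
    unfolding W_def using assms(3) a by (auto simp: Trans_F_def)
  ultimately have "x \<in> diagonal_visits X f W (map (\<lambda>i. c * Suc i - a (Suc i)) [0..<n])"
    using assms(3) unfolding Trans_F_infty_iff by blast
  then obtain k where k: "k \<ge> 1"
    "\<And>i. i < n \<Longrightarrow> (f ^^ (k * Suc i + (c * Suc i - a (Suc i)))) x \<in> W"
    by (auto simp: diagonal_visits_def)
  show "\<exists>k\<ge>N. \<forall>j\<in>{1..n}. (f ^^ (j * k)) x \<in> A j"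
  proof (intro exI[of _ "k + c"] conjI ballI)
    fix j assume j: "j \<in> {1..n}"
    then obtain i where "j = Suc i" "i < n" by (cases j) auto
    then have "(f ^^ (k * j + (c * j - a j))) x \<in> W"
      using k(2) by simp
    then have "(f ^^ a j) ((f ^^ (k * j + (c * j - a j))) x) \<in> A j"
      using j unfolding W_def by blast
    moreover have "a j + (k * j + (c * j - a j)) = j * (k + c)"
      using ac[OF j] by (simp add: algebra_simps)
    ultimately show "(f ^^ (j * (k + c))) x \<in> A j"
      by (simp only: funpow_add_apply[symmetric])
  qed (simp add: c_def)
qed

theorem theorem5p7:
  fixes X :: "'a::metric_space set" and f :: "'a \<Rightarrow> 'a"
  assumes "dyn_system X f"
  shows "(Delta_transitive X f \<longleftrightarrow> F_point_transitive X f F_infty)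
       \<and> (F_point_transitive X f F_infty \<longleftrightarrow> residual_in X (Trans_F X f F_infty))"
proof -
  have X: "compact X" "X \<noteq> {}" "continuous_on X f" "f ` X \<subseteq> X"
    using assms by (auto simp: dyn_system_def)
  have residual_imp_point: "residual_in X (Trans_F X f F_infty) \<Longrightarrow> F_point_transitive X f F_infty"
    using residual_in_nonempty[OF X(1,2)] by (simp add: F_point_transitive_def)
  have point_imp_residual: "F_point_transitive X f F_infty \<Longrightarrow> residual_in X (Trans_F X f F_infty)"
    using dense_diagonal_visits_imp_residual[OF assms] Trans_F_infty_imp_dense[OF X(4)]
    unfolding F_point_transitive_def by blast
  have "Delta_transitive X f \<Longrightarrow> F_point_transitive X f F_infty"
    using residual_imp_point dense_diagonal_visits_imp_residual[OF assms]
      Delta_transitive_imp_dense[OF X(3,4)] by blast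
  moreover have "F_point_transitive X f F_infty \<Longrightarrow> Delta_transitive X f"
    using Trans_F_infty_imp_diagonally_transitive[OF X(3,4)]
    unfolding F_point_transitive_def Delta_transitive_iff by (auto simp: Trans_F_def)
  ultimately show ?thesis using residual_imp_point point_imp_residual by blast
qed

end
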